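(* For every $T\ge T_0[\varphi_1]$ and every $2l\in(0,T/\ln T]$, the system of functions $$\Big\{|\tilde Z(t)|,\ |\tilde Z(t)|\cos\big(\tfrac{\pi}{l}(\varphi_1(t)-T)\big),\ |\tilde Z(t)|\sin\big(\tfrac{\pi}{l}(\varphi_1(t)-T)\big),\dots,|\tilde Z(t)|\cos\big(\tfrac{\pi}{l}n(\varphi_1(t)-T)\big),\ |\tilde Z(t)|\sin\big(\tfrac{\pi}{l}n(\varphi_1(t)-T)\big),\dots\Big\},$$ $t\in[\varphi_1^{-1}(T),\varphi_1^{-1}(T+2l)]$, is an orthogonal system on $[\varphi_1^{-1}(T),\varphi_1^{-1}(T+2l)]$ (with respect to the unweighted $L^2$ inner product $\int f g\,dt$).
   Context: Let $Z(t)=e^{i\vartheta(t)}\zeta(\tfrac12+it)$ with $\vartheta(t)=-\frac t2\ln\pi+\operatorname{Im}\ln\Gamma(\frac14+\frac{it}{2})$. Let $\mu(y)$ be continuous with $\mu(y)\ge 7y\ln y$ and $\Phi(\varphi)=\int_0^{\mu[\varphi]}Z^2(t)e^{-2t/\varphi}\,dt$. A Jacob's ladder is a continuous solution $\varphi(T)$, $T\ge T_0$, of $\Phi(\varphi(T))=\int_0^T Z^2(t)\,dt$ (from the author's earlier work). Put $\varphi_1=\frac12\varphi$ (defined for $T\ge T_0[\varphi_1]$) and $\tilde Z^2(t)=\frac{Z^2(t)}{2\Phi'(\varphi(t))}\ge0$, so $\varphi_1'=\tilde Z^2$, and $|\tilde Z(t)|=\sqrt{\tilde Z^2(t)}$.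 $\varphi_1$ is increasing and $\varphi_1^{-1}(x)$ denotes the unique $t$ with $\varphi_1(t)=x$. *)

theory Defs
  imports "HOL-Analysis.Analysis"
begin

text \<open>Riemann zeta on the half-plane Re s > 0 via the alternating (Dirichlet eta) series:
  zeta s = (1 - 2^(1-s))^(-1) * sum_{n>=1} (-1)^(n-1) n^(-s).  This is the analytic
  continuation of zeta there (valid on the critical line, where 1 - 2^(1-s) is nonzero).\<close>
definition zeta_eta :: "complex \<Rightarrow> complex" where
  "zeta_eta s = (\<Sum>n. (-1) ^ n / (of_nat (Suc n)) powr s) / (1 - 2 powr (1 - s))"

definition RS_theta :: "real \<Rightarrow> real" where
  "RS_theta t = - (t / 2) * ln pi + Im (ln_Gamma (Complex (1/4) (t/2)))"

text \<open>Hardy's function Z(t) = e^{i theta(t)} zeta(1/2 + i t); it is real-valued, we take its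
  real part to view it as a real function.\<close>
definition HardyZ :: "real \<Rightarrow> real" where
  "HardyZ t = Re (exp (\<i> * of_real (RS_theta t)) * zeta_eta (Complex (1/2) t))"

definition Phi_fun :: "(real \<Rightarrow> real) \<Rightarrow> real \<Rightarrow> real" where
  "Phi_fun \<mu> y = integral {0..\<mu> y} (\<lambda>t. (HardyZ t)\<^sup>2 * exp (- 2 * t / y))"

definition jacob_ladder :: "(real \<Rightarrow> real) \<Rightarrow> real \<Rightarrow> (real \<Rightarrow> real) \<Rightarrow> bool" where
  "jacob_ladder \<mu> T0 \<phi> \<longleftrightarrow> continuous_on {T0..} \<phi> \<and>
     (\<forall>T\<ge>T0. Phi_fun \<mu> (\<phi> T) = integral {0..T} (\<lambda>t. (HardyZ t)\<^sup>2))"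

definition Ztilde2 :: "(real \<Rightarrow> real) \<Rightarrow> (real \<Rightarrow> real) \<Rightarrow> real \<Rightarrow> real" where
  "Ztilde2 \<mu> \<phi> t = (HardyZ t)\<^sup>2 / (2 * deriv (Phi_fun \<mu>) (\<phi> t))"

definition inv_on_from :: "real \<Rightarrow> (real \<Rightarrow> real) \<Rightarrow> real \<Rightarrow> real" where
  "inv_on_from T0 f x = (THE t. T0 \<le> t \<and> f t = x)"

text \<open>The system: index 0 gives |Z~|, index 2n-1 gives |Z~| cos(pi/l n (phi1 - T)),
  index 2n gives |Z~| sin(pi/l n (phi1 - T)), n >= 1.\<close>
definition trig_system :: "(real \<Rightarrow> real) \<Rightarrow> (real \<Rightarrow> real) \<Rightarrow> real \<Rightarrow> real \<Rightarrow> nat \<Rightarrow> real \<Rightarrow> real" where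
  "trig_system a \<phi>1 T l k t =
     (if k = 0 then a t
      else if odd k then a t * cos (pi / l * real ((k + 1) div 2) * (\<phi>1 t - T))
      else a t * sin (pi / l * real (k div 2) * (\<phi>1 t - T)))"

end

theory Submission
  imports Defs
begin

text \<open>Writing \<open>sin\<close> as a shifted \<open>cos\<close>, every member of the unweighted system on
  \<open>[T, T + 2l]\<close> is \<open>cos (\<pi> n (x - T) / l - \<delta>)\<close> with a phase \<open>\<delta> \<in> {0, \<pi>/2}\<close>. The
  product of two distinct members splits into two such cosines: the sum frequency is nonzero,
  and the difference frequency is nonzero unless the members are the cosine and sine of the
  same frequency, when the phase difference \<open>\<pi>/2\<close> kills the constant term. Each full period
  of a nonconstant harmonic integrates to zero. The weighted system on
  \<open>[\<phi>\<^sub>1\<^sup>-\<^sup>1(T), \<phi>\<^sub>1\<^sup>-\<^sup>1(T + 2l)]\<close> is carried to the unweighted one by the substitution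
  \<open>x = \<phi>\<^sub>1(t)\<close>, whose Jacobian \<open>\<phi>\<^sub>1' = |Z~|\<^sup>2\<close> is exactly the product of the two weights.\<close>

definition harmonic_freq :: "nat \<Rightarrow> nat" where
  "harmonic_freq k = (k + 1) div 2"

definition harmonic_phase :: "nat \<Rightarrow> real" where
  "harmonic_phase k = (if k \<noteq> 0 \<and> even k then pi / 2 else 0)"

lemma trig_system_unit_eq_cos:
  "trig_system (\<lambda>_. 1) (\<lambda>x. x) T l k x =
     cos (pi / l * real (harmonic_freq k) * (x - T) - harmonic_phase k)"
proof -
  have "(k + 1) div 2 = k div 2" if "even k" using that by presburger
  then show ?thesis
    by (auto simp: trig_system_def harmonic_freq_def harmonic_phase_def cos_diff)
qed

lemma trig_system_eq_weight_mult:
  "trig_system a \<phi> T l k t = a t * trig_system (\<lambda>_. 1) (\<lambda>x. x) T l k (\<phi> t)"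
  by (simp add: trig_system_def)

lemma has_integral_cos_harmonic_period:
  fixes l T \<delta> :: real and z :: int
  assumes l: "l > 0"
  shows "((\<lambda>x. cos (pi / l * of_int z * (x - T) - \<delta>)) has_integral
           (if z = 0 then 2 * l * cos \<delta> else 0)) {T..T + 2 * l}"
proof (cases "z = 0")
  case True
  then show ?thesis
    using has_integral_const_real[of "cos \<delta>" T "T + 2 * l"] l by (simp add: algebra_simps)
next
  case False
  define c where "c = pi / l * of_int z"
  have "c \<noteq> 0" using l False by (simp add: c_def)
  then have "((\<lambda>x. sin (c * (x - T) - \<delta>) / c) has_real_derivative cos (c * (x - T) - \<delta>))
      (at x within {T..T + 2 * l})" for x
    by (auto intro!: derivative_eq_intros)
  then have "((\<lambda>x. cos (c * (x - T) - \<delta>)) has_integral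
      sin (c * (T + 2 * l - T) - \<delta>) / c - sin (c * (T - T) - \<delta>) / c) {T..T + 2 * l}"
    using l by (intro fundamental_theorem_of_calculus)
      (auto simp: has_real_derivative_iff_has_vector_derivative[symmetric])
  moreover have "c * (T + 2 * l - T) = 2 * pi * of_int z"
    using l by (simp add: c_def field_simps)
  ultimately show ?thesis using False by (simp add: c_def sin_diff)
qed

lemma trig_system_unit_orthogonal:
  fixes l T :: real
  assumes l: "l > 0" and ij: "i \<noteq> j"
  shows "((\<lambda>x. trig_system (\<lambda>_. 1) (\<lambda>x. x) T l i x * trig_system (\<lambda>_. 1) (\<lambda>x. x) T l j x)
           has_integral 0) {T..T + 2 * l}"
proof -
  define p q where "p = int (harmonic_freq i)" and "q = int (harmonic_freq j)"
  define \<delta> \<epsilon> where "\<delta> = harmonic_phase i" and "\<epsilon> = harmonic_phase j"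
  have sum_freq: "p + q \<noteq> 0"
    using ij by (simp add: p_def q_def harmonic_freq_def)
  have diff_phase: "cos (\<delta> - \<epsilon>) = 0" if "p - q = 0"
  proof -
    have "harmonic_freq i = harmonic_freq j" using that by (simp add: p_def q_def)
    with ij have "i \<noteq> 0 \<and> j \<noteq> 0 \<and> (even i \<longleftrightarrow> odd j)"
      by (simp add: harmonic_freq_def) presburger
    then show ?thesis by (auto simp: \<delta>_def \<epsilon>_def harmonic_phase_def)
  qed
  have product: "trig_system (\<lambda>_. 1) (\<lambda>x. x) T l i x * trig_system (\<lambda>_. 1) (\<lambda>x. x) T l j x =
      (cos (pi / l * of_int (p - q) * (x - T) - (\<delta> - \<epsilon>)) +
       cos (pi / l * of_int (p + q) * (x - T) - (\<delta> + \<epsilon>))) / 2" for x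
    unfolding trig_system_unit_eq_cos cos_times_cos p_def q_def \<delta>_def \<epsilon>_def
    by (simp add: algebra_simps)
  have diff_integral:
      "((\<lambda>x. cos (pi / l * of_int (p - q) * (x - T) - (\<delta> - \<epsilon>))) has_integral 0) {T..T + 2 * l}"
    using has_integral_cos_harmonic_period[OF l, of "p - q" T "\<delta> - \<epsilon>"] diff_phase
    by (cases "p - q = 0") auto
  have sum_integral:
      "((\<lambda>x. cos (pi / l * of_int (p + q) * (x - T) - (\<delta> + \<epsilon>))) has_integral 0) {T..T + 2 * l}"
    using has_integral_cos_harmonic_period[OF l, of "p + q" T "\<delta> + \<epsilon>"] sum_freq by simp
  show ?thesis
    unfolding product using has_integral_divide[OF has_integral_add[OF diff_integral sum_integral], of 2]
    by simp
qed

lemma trig_system_weighted_orthogonal: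
  fixes \<phi> w :: "real \<Rightarrow> real"
  assumes ab: "a \<le> b" and l: "l > 0"
    and ends: "\<phi> a = T" "\<phi> b = T + 2 * l"
    and mono: "mono_on {a..b} \<phi>"
    and deriv: "\<And>t. t \<in> {a..b} \<Longrightarrow> (\<phi> has_real_derivative w t) (at t within {a..b})"
    and w_nonneg: "\<And>t. t \<in> {a..b} \<Longrightarrow> w t \<ge> 0"
    and ij: "i \<noteq> j"
  shows "((\<lambda>t. trig_system (\<lambda>s. sqrt (w s)) \<phi> T l i t * trig_system (\<lambda>s. sqrt (w s)) \<phi> T l j t)
           has_integral 0) {a..b}"
proof -
  define h where
    "h x = trig_system (\<lambda>_. 1) (\<lambda>x. x) T l i x * trig_system (\<lambda>_. 1) (\<lambda>x. x) T l j x" for x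
  have image: "\<phi> ` {a..b} \<subseteq> {T..T + 2 * l}"
  proof (intro image_subsetI)
    fix t assume "t \<in> {a..b}"
    then show "\<phi> t \<in> {T..T + 2 * l}"
      using mono_onD[OF mono, of a t] mono_onD[OF mono, of t b] ends by auto
  qed
  have "continuous_on {T..T + 2 * l} h"
    unfolding h_def trig_system_unit_eq_cos by (intro continuous_intros)
  then have "((\<lambda>t. w t *\<^sub>R h (\<phi> t)) has_integral integral {\<phi> a..\<phi> b} h) {a..b}"
    using ab ends l image deriv by (intro has_integral_substitution) auto
  moreover have "integral {\<phi> a..\<phi> b} h = 0"
    unfolding ends h_def using trig_system_unit_orthogonal[OF l ij] by (rule integral_unique)
  ultimately have substituted: "((\<lambda>t. w t * h (\<phi> t)) has_integral 0) {a..b}" by simp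
  have weights: "trig_system (\<lambda>s. sqrt (w s)) \<phi> T l i t * trig_system (\<lambda>s. sqrt (w s)) \<phi> T l j t =
      w t * h (\<phi> t)" if "t \<in> {a..b}" for t
  proof -
    have "sqrt (w t) * sqrt (w t) = w t" using w_nonneg[OF that] by simp
    then show ?thesis
      unfolding trig_system_eq_weight_mult[of "\<lambda>s. sqrt (w s)"] h_def by (metis mult.assoc mult.left_commute)
  qed
  show ?thesis by (subst has_integral_cong[OF weights]) (use substituted in simp_all)
qed

lemma inv_on_from_eqI:
  assumes "strict_mono_on {T0..} f" "T0 \<le> t" "f t = x"
  shows "inv_on_from T0 f x = t"
  unfolding inv_on_from_def
  using assms strict_mono_on_imp_inj_on[OF assms(1)] by (auto intro!: the_equality dest: inj_onD)

lemma trig_system_weighted_orthogonal_on_preimage: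
  fixes \<phi>\<^sub>1 w :: "real \<Rightarrow> real"
  assumes sm: "strict_mono_on {T0..} \<phi>\<^sub>1"
    and deriv: "\<And>t. t \<ge> T0 \<Longrightarrow> (\<phi>\<^sub>1 has_real_derivative w t) (at t within {T0..})"
    and w_nonneg: "\<And>t. t \<ge> T0 \<Longrightarrow> w t \<ge> 0"
    and range: "T \<in> \<phi>\<^sub>1 ` {T0..}" "T + 2 * l \<in> \<phi>\<^sub>1 ` {T0..}"
    and l: "l > 0" and ij: "i \<noteq> j"
  shows "((\<lambda>t. trig_system (\<lambda>s. sqrt (w s)) \<phi>\<^sub>1 T l i t * trig_system (\<lambda>s. sqrt (w s)) \<phi>\<^sub>1 T l j t)
           has_integral 0) {inv_on_from T0 \<phi>\<^sub>1 T .. inv_on_from T0 \<phi>\<^sub>1 (T + 2 * l)}"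
proof -
  obtain a b where a: "a \<ge> T0" "\<phi>\<^sub>1 a = T" and b: "b \<ge> T0" "\<phi>\<^sub>1 b = T + 2 * l"
    using range by auto
  have ab: "a \<le> b"
    using a b l strict_mono_on_leD[OF sm, of b a] by fastforce
  have "((\<lambda>t. trig_system (\<lambda>s. sqrt (w s)) \<phi>\<^sub>1 T l i t * trig_system (\<lambda>s. sqrt (w s)) \<phi>\<^sub>1 T l j t)
           has_integral 0) {a..b}"
  proof (rule trig_system_weighted_orthogonal[OF ab l a(2) b(2) _ _ _ ij])
    show "mono_on {a..b} \<phi>\<^sub>1"
      using strict_mono_on_imp_mono_on[OF sm] a by (auto intro: mono_on_subset)
    show "(\<phi>\<^sub>1 has_real_derivative w t) (at t within {a..b})" if "t \<in> {a..b}" for t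
      using deriv[of t] that a by (auto intro: DERIV_subset)
  qed (use w_nonneg a in auto)
  then show ?thesis
    using inv_on_from_eqI[OF sm a] inv_on_from_eqI[OF sm b] by simp
qed

theorem mainTheorem7:
  fixes \<mu> :: "real \<Rightarrow> real" and \<phi> :: "real \<Rightarrow> real" and T0 T0\<phi>1 :: real
  assumes mu_cont: "continuous_on {0<..} \<mu>"
    and mu_ge: "\<forall>y>0. \<mu> y \<ge> 7 * y * ln y"
    and ladder: "jacob_ladder \<mu> T0 \<phi>"
    and deriv_phi1: "\<forall>t\<ge>T0. ((\<lambda>s. \<phi> s / 2) has_real_derivative Ztilde2 \<mu> \<phi> t) (at t within {T0..})"
    and Zt_nonneg: "\<forall>t\<ge>T0. Ztilde2 \<mu> \<phi> t \<ge> 0"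
    and phi1_incr: "strict_mono_on {T0..} (\<lambda>s. \<phi> s / 2)"
    and T0phi1: "T0\<phi>1 \<ge> T0" "{T0\<phi>1..} \<subseteq> (\<lambda>s. \<phi> s / 2) ` {T0..}"
  shows "\<forall>T l. T \<ge> T0\<phi>1 \<and> 0 < 2 * l \<and> 2 * l \<le> T / ln T \<longrightarrow>
           (\<forall>i j. i \<noteq> j \<longrightarrow>
              ((\<lambda>t. trig_system (\<lambda>s. sqrt (Ztilde2 \<mu> \<phi> s)) (\<lambda>s. \<phi> s / 2) T l i t *
                     trig_system (\<lambda>s. sqrt (Ztilde2 \<mu> \<phi> s)) (\<lambda>s. \<phi> s / 2) T l j t)
               has_integral 0)
              {inv_on_from T0 (\<lambda>s. \<phi> s / 2) T .. inv_on_from T0 (\<lambda>s. \<phi> s / 2) (T + 2 * l)})"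
  using deriv_phi1 Zt_nonneg T0phi1(2)
  by (auto intro!: trig_system_weighted_orthogonal_on_preimage[OF phi1_incr])

end
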